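(* Let $D\subset\mathbb{C}^n$ be a hyperconvex domain, $\mathscr{P}=\big(\{\mathbf{z}_i\}_{i=1}^p,\{\mathbf{f}_{0,i}\}_{i=1}^p,\{u_{0,i}\}_{i=1}^p\big)$ a priori data on $D$, and $\Phi^D_{\mathscr{P},\max}$ a global Zhou weight related to $\mathscr{P}$ on $D$. Then for every $z\in D$, $$\Phi^D_{\mathscr{P},\max}(z)=\sup\big\{\phi(z):\phi\in\mathrm{PSH}^-(D),\ (\mathbf{f}_{0,i},\mathbf{z}_i)\notin\mathcal{I}(u_{0,i}+\phi)_{\mathbf{z}_i}\text{ and }\phi\ge\Phi^D_{\mathscr{P},\max}+O(1)\text{ near }\mathbf{z}_i,\ \forall i=1,\dots,p\big\}.$$
   Context: $\mathrm{PSH}^-(D)$: negative plurisubharmonic functions on $D$. Hyperconvex: admits a continuous plurisubharmonic exhaustion $\varrho:D\to(-\infty,0)$. $\mathcal{I}(u)_z=\{(f,z)\in\mathcal O_z:|f|^2e^{-2u}\text{ integrable near }z\}$; for a holomorphic vector $\mathbf f$, $|\mathbf f|^2=\sum_j|f_j|^2$ and $(\mathbf f,z)\notin\mathcal{I}(u)_z$ means $|\mathbf f|^2e^{-2u}$ is not integrable near $z$. A priori data $\mathscr{P}$: distinct $\mathbf{z}_1,\dots,\mathbf{z}_p\in D$, holomorphic vectors $\mathbf{f}_{0,i}$ near $\mathbf{z}_i$, plurisubharmonic $u_{0,i}$ near $\mathbf{z}_i$ with $|\mathbf{f}_{0,i}|^2e^{-2u_{0,i}}$ integrable near $\mathbf{z}_i$.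 Global Zhou weight related to $\mathscr{P}$ on $D$: $\Phi\in\mathrm{PSH}^-(D)$ such that (1) for large $N_i$, $|\mathbf{f}_{0,i}|^2e^{-2u_{0,i}}|z-\mathbf{z}_i|^{2N_i}e^{-2\Phi}$ is integrable near $\mathbf{z}_i$ for all $i$; (2) $|\mathbf{f}_{0,i}|^2e^{-2u_{0,i}-2\Phi}$ is not integrable near $\mathbf{z}_i$ for all $i$; (3) any $\Psi\in\mathrm{PSH}^-(D)$ with $\Psi\ge\Phi$ and $|\mathbf{f}_{0,i}|^2e^{-2u_{0,i}-2\Psi}$ non-integrable near every $\mathbf{z}_i$ equals $\Phi$ on $D$. *)

theory Defs
  imports "HOL-Analysis.Analysis"
begin

text \<open>Points of C^n are modelled as vectors of type complex ^ 'n (n = CARD('n)).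
  Plurisubharmonic functions take values in the extended reals (value -\<infinity> allowed).\<close>

definition eexp :: "ereal \<Rightarrow> ennreal" where
  "eexp x = (case x of ereal r \<Rightarrow> ennreal (exp r) | PInfty \<Rightarrow> \<infinity> | MInfty \<Rightarrow> 0)"

definition circle_integral :: "(real \<Rightarrow> ereal) \<Rightarrow> ereal" where
  "circle_integral g =
     enn2ereal (\<integral>\<^sup>+ t. e2ennreal (g t) * indicator {0..2*pi} t \<partial>lborel)
   - enn2ereal (\<integral>\<^sup>+ t. e2ennreal (- g t) * indicator {0..2*pi} t \<partial>lborel)"

definition usc_on :: "(complex ^ 'n) set \<Rightarrow> (complex ^ 'n \<Rightarrow> ereal) \<Rightarrow> bool" where
  "usc_on U u \<longleftrightarrow> (\<forall>x\<in>U. \<forall>c. u x < c \<longrightarrow>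
      (\<exists>e>0. \<forall>y\<in>U. dist y x < e \<longrightarrow> u y < c))"

definition psh :: "(complex ^ 'n) set \<Rightarrow> (complex ^ 'n \<Rightarrow> ereal) \<Rightarrow> bool" where
  "psh U u \<longleftrightarrow> open U \<and> usc_on U u \<and> (\<forall>x\<in>U. u x < \<infinity>) \<and>
     (\<forall>a b. (\<forall>\<zeta>. cmod \<zeta> \<le> 1 \<longrightarrow> a + \<zeta> *s b \<in> U) \<longrightarrow>
        u a \<le> ereal (1 / (2*pi)) * circle_integral (\<lambda>t. u (a + cis t *s b))) \<and>
     (\<forall>x\<in>U. \<exists>y\<in>connected_component_set U x. u y \<noteq> -\<infinity>)"

definition psh_neg :: "(complex ^ 'n) set \<Rightarrow> (complex ^ 'n \<Rightarrow> ereal) \<Rightarrow> bool" where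
  "psh_neg D u \<longleftrightarrow> psh D u \<and> (\<forall>x\<in>D. u x < 0)"

definition domain :: "(complex ^ 'n) set \<Rightarrow> bool" where
  "domain D \<longleftrightarrow> open D \<and> connected D \<and> D \<noteq> {}"

definition hyperconvex :: "(complex ^ 'n) set \<Rightarrow> bool" where
  "hyperconvex D \<longleftrightarrow> domain D \<and> (\<exists>\<rho> :: complex ^ 'n \<Rightarrow> real.
      continuous_on D \<rho> \<and> psh D (\<lambda>z. ereal (\<rho> z)) \<and> (\<forall>z\<in>D. \<rho> z < 0) \<and>
      (\<forall>c<0. compact (closure {z\<in>D. \<rho> z < c}) \<and> closure {z\<in>D. \<rho> z < c} \<subseteq> D))"

definition holo :: "(complex ^ 'n) set \<Rightarrow> (complex ^ 'n \<Rightarrow> complex) \<Rightarrow> bool" where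
  "holo U f \<longleftrightarrow> open U \<and> (\<forall>x\<in>U. \<exists>f'. (f has_derivative f') (at x) \<and>
      (\<forall>c v. f' (c *s v) = c * f' v))"

definition loc_int :: "complex ^ 'n \<Rightarrow> (complex ^ 'n \<Rightarrow> ennreal) \<Rightarrow> bool" where
  "loc_int z g \<longleftrightarrow> (\<exists>r>0. (\<integral>\<^sup>+ w. g w * indicator (ball z r) w \<partial>lborel) < \<infinity>)"

definition sqnorm :: "nat \<Rightarrow> (nat \<Rightarrow> complex ^ 'n \<Rightarrow> complex) \<Rightarrow> complex ^ 'n \<Rightarrow> real" where
  "sqnorm m f w = (\<Sum>j<m. (cmod (f j w))\<^sup>2)"

definition apriori_data :: "(complex ^ 'n) set \<Rightarrow> nat \<Rightarrow> (nat \<Rightarrow> complex ^ 'n) \<Rightarrow>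
    (nat \<Rightarrow> nat) \<Rightarrow> (nat \<Rightarrow> nat \<Rightarrow> complex ^ 'n \<Rightarrow> complex) \<Rightarrow>
    (nat \<Rightarrow> complex ^ 'n \<Rightarrow> ereal) \<Rightarrow> (nat \<Rightarrow> (complex ^ 'n) set) \<Rightarrow> bool" where
  "apriori_data D p z m f u U \<longleftrightarrow> 0 < p \<and> inj_on z {..<p} \<and>
     (\<forall>i<p. z i \<in> D \<and> open (U i) \<and> z i \<in> U i \<and> (\<forall>j<m i. holo (U i) (f i j)) \<and>
        psh (U i) (u i) \<and>
        loc_int (z i) (\<lambda>w. ennreal (sqnorm (m i) (f i) w) * eexp (- 2 * u i w)))"

definition global_zhou_weight :: "(complex ^ 'n) set \<Rightarrow> nat \<Rightarrow> (nat \<Rightarrow> complex ^ 'n) \<Rightarrow>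
    (nat \<Rightarrow> nat) \<Rightarrow> (nat \<Rightarrow> nat \<Rightarrow> complex ^ 'n \<Rightarrow> complex) \<Rightarrow>
    (nat \<Rightarrow> complex ^ 'n \<Rightarrow> ereal) \<Rightarrow> (complex ^ 'n \<Rightarrow> ereal) \<Rightarrow> bool" where
  "global_zhou_weight D p z m f u \<Phi> \<longleftrightarrow> psh_neg D \<Phi> \<and>
     (\<forall>i<p. \<exists>N0::nat. \<forall>N\<ge>N0. loc_int (z i) (\<lambda>w. ennreal (sqnorm (m i) (f i) w)
          * eexp (- 2 * u i w) * ennreal (norm (w - z i) ^ (2 * N)) * eexp (- 2 * \<Phi> w))) \<and>
     (\<forall>i<p. \<not> loc_int (z i) (\<lambda>w. ennreal (sqnorm (m i) (f i) w) * eexp (- 2 * (u i w + \<Phi> w)))) \<and>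
     (\<forall>\<Psi>. psh_neg D \<Psi> \<and> (\<forall>w\<in>D. \<Psi> w \<ge> \<Phi> w) \<and>
        (\<forall>i<p. \<not> loc_int (z i) (\<lambda>w. ennreal (sqnorm (m i) (f i) w) * eexp (- 2 * (u i w + \<Psi> w))))
        \<longrightarrow> (\<forall>w\<in>D. \<Psi> w = \<Phi> w))"

end

theory Submission
  imports Defs
begin

text \<open>If \<open>\<phi>\<close> is admissible, then so is \<open>max \<phi> \<Phi>\<close>: it is negative plurisubharmonic, and since
  \<open>\<phi> \<ge> \<Phi> - C\<close> near each \<open>z i\<close>, its weight is bounded by \<open>e\<^sup>2\<^sup>C\<close> times that of \<open>\<phi>\<close> there, so
  non-integrability is inherited. As \<open>max \<phi> \<Phi> \<ge> \<Phi>\<close>, maximality of the Zhou weight forces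
  \<open>max \<phi> \<Phi> = \<Phi>\<close>, i.e. \<open>\<phi> \<le> \<Phi>\<close>; and \<open>\<Phi>\<close> itself is admissible, so the supremum is attained.\<close>

text \<open>No measurability of \<open>f\<close> is needed, in contrast to \<open>nn_integral_cmult\<close>.\<close>
lemma nn_integral_cmult_le:
  fixes c :: ennreal
  assumes c: "c \<noteq> \<infinity>"
  shows "(\<integral>\<^sup>+ x. c * f x \<partial>M) \<le> c * (\<integral>\<^sup>+ x. f x \<partial>M)"
proof (cases "c = 0")
  case True
  then show ?thesis by simp
next
  case False
  show ?thesis
    unfolding nn_integral_def
  proof (rule SUP_least)
    fix g assume g: "g \<in> {g. simple_function M g \<and> g \<le> (\<lambda>x. c * f x)}"
    define h where "h = (\<lambda>x. g x / c)"
    have cc: "c / c = 1"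
      using False c by (simp add: ennreal_divide_self top.not_eq_extremum)
    have gh: "g = (\<lambda>x. c * h x)"
      unfolding h_def
      by (simp add: ennreal_times_divide[symmetric] mult.commute[of c] ennreal_divide_times cc)
    have h_simple: "simple_function M h"
      unfolding h_def using g by (auto intro: simple_function_compose1[where g="\<lambda>y. y / c"])
    have h_le: "h \<le> f"
      unfolding h_def le_fun_def
    proof
      fix x
      have "g x \<le> c * f x" using g by (auto simp: le_fun_def)
      then have "g x / c \<le> (f x * c) / c" by (simp add: divide_right_mono_ennreal mult.commute)
      also have "\<dots> = f x" using False c by (simp add: ennreal_mult_divide_eq)
      finally show "g x / c \<le> f x" .
    qed
    have "integral\<^sup>S M g = c * integral\<^sup>S M h" using gh h_simple by simp
    also have "\<dots> \<le> c * (SUP g \<in> {g. simple_function M g \<and> g \<le> f}. integral\<^sup>S M g)"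
      by (intro mult_left_mono SUP_upper) (use h_simple h_le in auto)
    finally show "integral\<^sup>S M g \<le> c * (SUP g \<in> {g. simple_function M g \<and> g \<le> f}. integral\<^sup>S M g)" .
  qed
qed

lemma loc_int_le_cmult:
  assumes "loc_int z h" and "c \<noteq> \<infinity>" and "s > 0"
    and le: "\<And>x. x \<in> ball z s \<Longrightarrow> g x \<le> c * h x"
  shows "loc_int z g"
proof -
  obtain r where r: "r > 0" and fin: "(\<integral>\<^sup>+ x. h x * indicator (ball z r) x \<partial>lborel) < \<infinity>"
    using assms(1) unfolding loc_int_def by blast
  define t where "t = min r s"
  have "(\<integral>\<^sup>+ x. g x * indicator (ball z t) x \<partial>lborel)
      \<le> (\<integral>\<^sup>+ x. c * (h x * indicator (ball z r) x) \<partial>lborel)"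
    by (intro nn_integral_mono) (auto simp: t_def le indicator_def)
  also have "\<dots> \<le> c * (\<integral>\<^sup>+ x. h x * indicator (ball z r) x \<partial>lborel)"
    by (rule nn_integral_cmult_le[OF \<open>c \<noteq> \<infinity>\<close>])
  also have "\<dots> < \<infinity>"
    using fin \<open>c \<noteq> \<infinity>\<close> by (simp add: ennreal_mult_less_top top.not_eq_extremum)
  finally have "(\<integral>\<^sup>+ x. g x * indicator (ball z t) x \<partial>lborel) < \<infinity>" .
  then show ?thesis
    unfolding loc_int_def using r \<open>s > 0\<close> by (intro exI[of _ t]) (simp add: t_def)
qed

lemma eexp_le_cmult:
  fixes a b :: ereal and C :: real
  assumes "b \<le> a + ereal C"
  shows "eexp (- 2 * a) \<le> ennreal (exp (2 * C)) * eexp (- 2 * b)"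
proof (cases a)
  case (real r)
  show ?thesis
  proof (cases b)
    case (real s)
    with \<open>a = ereal r\<close> assms have "s \<le> r + C" by simp
    then have "exp (- 2 * r) \<le> exp (2 * C) * exp (- 2 * s)"
      by (simp add: exp_add[symmetric])
    then show ?thesis using \<open>a = ereal r\<close> real
      by (simp add: eexp_def ennreal_mult[symmetric] ennreal_leI)
  next
    case PInf
    with \<open>a = ereal r\<close> assms show ?thesis by simp
  next
    case MInf
    then show ?thesis by (simp add: eexp_def)
  qed
next
  case PInf
  then show ?thesis by (simp add: eexp_def)
next
  case MInf
  with assms have "b = -\<infinity>" by simp
  with MInf show ?thesis by (simp add: eexp_def)
qed

lemma circle_integral_mono:
  assumes "\<And>t. g t \<le> h t"
  shows "circle_integral g \<le> circle_integral h"
proof -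
  have pos: "(\<integral>\<^sup>+ t. e2ennreal (g t) * indicator {0..2*pi} t \<partial>lborel)
        \<le> (\<integral>\<^sup>+ t. e2ennreal (h t) * indicator {0..2*pi} t \<partial>lborel)"
    by (intro nn_integral_mono mult_right_mono e2ennreal_mono assms) simp
  have neg: "(\<integral>\<^sup>+ t. e2ennreal (- h t) * indicator {0..2*pi} t \<partial>lborel)
        \<le> (\<integral>\<^sup>+ t. e2ennreal (- g t) * indicator {0..2*pi} t \<partial>lborel)"
    by (intro nn_integral_mono mult_right_mono e2ennreal_mono) (use assms in auto)
  show ?thesis
    unfolding circle_integral_def
    by (intro ereal_minus_mono) (use pos neg less_eq_ennreal.rep_eq in auto)
qed

lemma usc_on_max:
  assumes "usc_on U u" and "usc_on U v"
  shows "usc_on U (\<lambda>x. max (u x) (v x))"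
  unfolding usc_on_def
proof (intro ballI allI impI)
  fix x c assume x: "x \<in> U" and "max (u x) (v x) < c"
  then have "u x < c" "v x < c" by auto
  obtain e1 where "e1 > 0" "\<forall>y\<in>U. dist y x < e1 \<longrightarrow> u y < c"
    using assms(1) x \<open>u x < c\<close> unfolding usc_on_def by blast
  moreover obtain e2 where "e2 > 0" "\<forall>y\<in>U. dist y x < e2 \<longrightarrow> v y < c"
    using assms(2) x \<open>v x < c\<close> unfolding usc_on_def by blast
  ultimately show "\<exists>e>0. \<forall>y\<in>U. dist y x < e \<longrightarrow> max (u y) (v y) < c"
    by (intro exI[of _ "min e1 e2"]) auto
qed

lemma psh_max:
  assumes u: "psh U u" and v: "psh U v"
  shows "psh U (\<lambda>x. max (u x) (v x))"
  unfolding psh_def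
proof (intro conjI allI impI ballI)
  show "open U" using u unfolding psh_def by blast
  show "usc_on U (\<lambda>x. max (u x) (v x))"
    using u v unfolding psh_def by (blast intro: usc_on_max)
  show "max (u x) (v x) < \<infinity>" if "x \<in> U" for x
    using u v that unfolding psh_def by (auto simp: max_def)
next
  fix a b assume disc: "\<forall>\<zeta>. cmod \<zeta> \<le> 1 \<longrightarrow> a + \<zeta> *s b \<in> U"
  let ?mean = "\<lambda>w. ereal (1 / (2*pi)) * circle_integral (\<lambda>t. w (a + cis t *s b))"
  have "?mean u \<le> ?mean (\<lambda>x. max (u x) (v x))" "?mean v \<le> ?mean (\<lambda>x. max (u x) (v x))"
    by (intro ereal_mult_left_mono circle_integral_mono; simp)+
  moreover have "u a \<le> ?mean u" "v a \<le> ?mean v"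
    using u v disc unfolding psh_def by blast+
  ultimately show "max (u a) (v a) \<le> ?mean (\<lambda>x. max (u x) (v x))"
    by (meson max.boundedI order_trans)
next
  fix x assume "x \<in> U"
  then obtain y where "y \<in> connected_component_set U x" "v y \<noteq> -\<infinity>"
    using v unfolding psh_def by blast
  then show "\<exists>y\<in>connected_component_set U x. max (u y) (v y) \<noteq> -\<infinity>"
    by (metis MInfty_neq_ereal(1) max.cobounded2 ereal_infty_less_eq(2))
qed

lemma psh_neg_max:
  assumes "psh_neg D u" and "psh_neg D v"
  shows "psh_neg D (\<lambda>x. max (u x) (v x))"
  using assms psh_max unfolding psh_neg_def by auto

lemma not_loc_int_weight_max:
  fixes a \<phi> \<Phi> :: "complex ^ 'n \<Rightarrow> ereal"
  assumes not_int: "\<not> loc_int z (\<lambda>x. ennreal (g x) * eexp (- 2 * (a x + \<phi> x)))"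
    and "z \<in> D" and "open D" and "r > 0"
    and lower: "\<forall>x\<in>ball z r \<inter> D. \<phi> x \<ge> \<Phi> x - ereal C"
  shows "\<not> loc_int z (\<lambda>x. ennreal (g x) * eexp (- 2 * (a x + max (\<phi> x) (\<Phi> x))))"
proof
  assume int_max: "loc_int z (\<lambda>x. ennreal (g x) * eexp (- 2 * (a x + max (\<phi> x) (\<Phi> x))))"
  obtain rD where "rD > 0" and "ball z rD \<subseteq> D"
    using \<open>open D\<close> \<open>z \<in> D\<close> open_contains_ball by blast
  define C' where "C' = max C 0"
  have "0 \<le> C'" by (simp add: C'_def)
  have bound: "ennreal (g x) * eexp (- 2 * (a x + \<phi> x))
      \<le> ennreal (exp (2 * C')) * (ennreal (g x) * eexp (- 2 * (a x + max (\<phi> x) (\<Phi> x))))"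
    if x: "x \<in> ball z (min r rD)" for x
  proof -
    have "\<Phi> x \<le> \<phi> x + ereal C"
      using lower x \<open>ball z rD \<subseteq> D\<close> by (auto simp: ereal_minus_le_iff)
    also have "\<dots> \<le> \<phi> x + ereal C'"
      by (intro add_left_mono) (simp add: C'_def)
    moreover have "\<phi> x \<le> \<phi> x + ereal C'"
      using \<open>0 \<le> C'\<close> by (intro add_increasing2) simp_all
    ultimately have "max (\<phi> x) (\<Phi> x) \<le> \<phi> x + ereal C'"
      by simp
    then have "a x + max (\<phi> x) (\<Phi> x) \<le> (a x + \<phi> x) + ereal C'"
      by (metis add.assoc add_left_mono)
    then have "eexp (- 2 * (a x + \<phi> x))
        \<le> ennreal (exp (2 * C')) * eexp (- 2 * (a x + max (\<phi> x) (\<Phi> x)))"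
      by (rule eexp_le_cmult)
    then show ?thesis
      by (simp add: mult_left_mono mult.left_commute)
  qed
  have "loc_int z (\<lambda>x. ennreal (g x) * eexp (- 2 * (a x + \<phi> x)))"
    by (rule loc_int_le_cmult[where s="min r rD", OF int_max _ _ bound]) (use \<open>r > 0\<close> \<open>rD > 0\<close> in simp_all)
  with not_int show False by contradiction
qed

theorem corollary1p8:
  fixes D :: "(complex ^ 'n) set"
    and p :: nat and z :: "nat \<Rightarrow> complex ^ 'n" and m :: "nat \<Rightarrow> nat"
    and f :: "nat \<Rightarrow> nat \<Rightarrow> complex ^ 'n \<Rightarrow> complex"
    and u :: "nat \<Rightarrow> complex ^ 'n \<Rightarrow> ereal" and U :: "nat \<Rightarrow> (complex ^ 'n) set"
    and \<Phi> :: "complex ^ 'n \<Rightarrow> ereal"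
  assumes "hyperconvex D"
    and "apriori_data D p z m f u U"
    and "global_zhou_weight D p z m f u \<Phi>"
    and "w \<in> D"
  shows "\<Phi> w = Sup {\<phi> w | \<phi>. psh_neg D \<phi> \<and>
           (\<forall>i<p. \<not> loc_int (z i)
                    (\<lambda>x. ennreal (sqnorm (m i) (f i) x) * eexp (- 2 * (u i x + \<phi> x))) \<and>
                  (\<exists>C::real. \<exists>r>0. \<forall>x\<in>ball (z i) r \<inter> D. \<phi> x \<ge> \<Phi> x - ereal C))}"
    (is "_ = Sup ?S")
proof (rule antisym)
  let ?weight = "\<lambda>i \<psi> x. ennreal (sqnorm (m i) (f i) x) * eexp (- 2 * (u i x + \<psi> x))"
  have \<Phi>: "psh_neg D \<Phi>" "\<forall>i<p. \<not> loc_int (z i) (?weight i \<Phi>)"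
    and maximal: "\<And>\<Psi>. psh_neg D \<Psi> \<Longrightarrow> \<forall>x\<in>D. \<Psi> x \<ge> \<Phi> x \<Longrightarrow>
        \<forall>i<p. \<not> loc_int (z i) (?weight i \<Psi>) \<Longrightarrow> \<forall>x\<in>D. \<Psi> x = \<Phi> x"
    using assms(3) unfolding global_zhou_weight_def by auto
  have "\<exists>C::real. \<exists>r>0. \<forall>x\<in>ball (z i) r \<inter> D. \<Phi> x \<ge> \<Phi> x - ereal C" for i
    by (rule exI[of _ 0], rule exI[of _ 1]) simp
  then have "\<Phi> w \<in> ?S"
    using \<Phi> by blast
  then show "\<Phi> w \<le> Sup ?S" by (rule Sup_upper)
  show "Sup ?S \<le> \<Phi> w"
  proof (rule Sup_least)
    fix y assume "y \<in> ?S"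
    then obtain \<phi> where y: "y = \<phi> w" and "psh_neg D \<phi>"
      and admissible: "\<forall>i<p. \<not> loc_int (z i) (?weight i \<phi>) \<and>
          (\<exists>C::real. \<exists>r>0. \<forall>x\<in>ball (z i) r \<inter> D. \<phi> x \<ge> \<Phi> x - ereal C)"
      by blast
    have "open D" using \<Phi>(1) unfolding psh_neg_def psh_def by blast
    have "\<not> loc_int (z i) (?weight i (\<lambda>x. max (\<phi> x) (\<Phi> x)))" if "i < p" for i
    proof -
      obtain C r where "r > 0" "\<forall>x\<in>ball (z i) r \<inter> D. \<phi> x \<ge> \<Phi> x - ereal C"
        using admissible \<open>i < p\<close> by blast
      moreover have "z i \<in> D"
        using assms(2) \<open>i < p\<close> unfolding apriori_data_def by blast
      ultimately show ?thesis
        using not_loc_int_weight_max admissible \<open>i < p\<close> \<open>open D\<close> by blast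
    qed
    then have "\<forall>x\<in>D. max (\<phi> x) (\<Phi> x) = \<Phi> x"
      by (intro maximal psh_neg_max[OF \<open>psh_neg D \<phi>\<close> \<Phi>(1)]) auto
    then show "y \<le> \<Phi> w" using assms(4) y by (metis max.cobounded1)
  qed
qed

end
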